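(* Let $P_S,H_{SR},H_{SD},H_{RD},\sigma_a^2,\sigma_b^2>0$, $\eta\in(0,1]$, assume $\sigma_R^2=\sigma_D^2=\sigma_a^2+\sigma_b^2$ and $H_{SR}>H_{SD}$, and let $\rho^{\mathrm{th}}=1-\frac{H_{SD}\sigma_b^2}{H_{SR}\sigma_D^2-H_{SD}\sigma_a^2}$. Fix $\rho\in(0,\rho^{\mathrm{th}})$ and set $C^{(PS)}_{SR}=\log\big(1+\frac{(1-\rho)P_SH_{SR}}{(1-\rho)\sigma_a^2+\sigma_b^2}\big)$, $b=C_{SD}=\log(1+P_SH_{SD}/\sigma_D^2)$, $a'=C^{(PS)}_{SR}-C_{SD}$, $c'=\eta\rho H_{SR}H_{RD}P_S/\sigma_D^2$. Then the problem $$\max_{\lambda\in(0,1)}\min\Big\{\lambda C^{(PS)}_{SR},\ \lambda b+(1-\lambda)\Big(b+\log\Big(1+\frac{c'\lambda}{1-\lambda}\Big)\Big)\Big\}$$ is solved by $\lambda^*=\max\{\lambda_1,\lambda_2\}$, where $$\lambda_1=\frac{-\frac{1}{a'}\mathcal W_{-1}\!\big(-\frac{a'}{c'}e^{-b-\frac{a'}{c'}}\big)-\frac1{c'}}{1-\frac{1}{a'}\mathcal W_{-1}\!\big(-\frac{a'}{c'}e^{-b-\frac{a'}{c'}}\big)-\frac1{c'}},\qquad \lambda_2=\frac{e^{\mathcal W_0(\frac{c'-1}{e})+1}-1}{e^{\mathcal W_0(\frac{c'-1}{e})+1}+c'-1}.$$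
   Context: $\log$ is the natural logarithm; $\mathcal W_0,\mathcal W_{-1}$ are the principal and lower real branches of the Lambert W function. This is the power-splitting (PS) relay protocol with mutual-information accumulation at the destination for a fixed power-splitting ratio $\rho$ (fraction of received power used for energy harvesting), with relay forwarding power $\eta\rho H_{SR}P_S\lambda/(1-\lambda)$; $\lambda$ is the broadcast time fraction. $\sigma_a^2,\sigma_b^2$ are antenna and signal-processing noise powers at the relay. *)

theory Defs
  imports Complex_Main
begin

text \<open>Real branches of the Lambert W function.
  Principal branch: for x \<ge> -1/e, the unique w \<ge> -1 with w e^w = x.
  Lower branch: for -1/e \<le> x < 0, the unique w \<le> -1 with w e^w = x.\<close>

definition lambertW0 :: "real \<Rightarrow> real" where
  "lambertW0 x = (THE w. -1 \<le> w \<and> w * exp w = x)"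

definition lambertWm1 :: "real \<Rightarrow> real" where
  "lambertWm1 x = (THE w. w \<le> -1 \<and> w * exp w = x)"

end

theory Submission
  imports Defs
begin

text \<open>
  Substitute \<open>y = 1 + c' \<lambda> / (1 - \<lambda>)\<close>, an increasing bijection of \<open>(0, 1)\<close> onto
  \<open>(1, \<infinity>)\<close>. The relay rate becomes \<open>b + c' ln y / (y + c' - 1)\<close>, which is maximal at
  the root of \<open>ln y = 1 + (c' - 1) / y\<close> and decreasing beyond it; this root is
  \<open>exp (W\<^sub>0 ((c' - 1) / e) + 1)\<close> and corresponds to \<open>\<lambda>\<^sub>2\<close>. The direct rate minus the
  relay rate becomes \<open>(1 - \<lambda>) (k (y - 1) - b - ln y)\<close> with \<open>k = a' / c'\<close>; the line
  \<open>k (y - 1) - b\<close> overtakes the concave \<open>ln y\<close> at the root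
  \<open>y = -W\<^sub>-\<^sub>1 (-k e\<^sup>-\<^sup>b\<^sup>-\<^sup>k) / k > 1\<close>, where \<open>k y \<ge> 1\<close>, and the direct rate
  dominates from there on; this gives \<open>\<lambda>\<^sub>1\<close>. The threshold \<open>\<rho> < \<rho>\<^sup>t\<^sup>h\<close> is exactly what
  makes \<open>a' > 0\<close>. The minimum of an increasing function and a unimodal one that crosses it
  once is maximised at the crossing if that lies past the peak, and at the peak otherwise.
\<close>

lemma has_real_derivative_mult_exp:
  "((\<lambda>w. w * exp w) has_real_derivative (w + 1) * exp w) (at w)"
  by (auto intro!: derivative_eq_intros simp: algebra_simps)

lemma mult_exp_strict_mono_on: "strict_mono_on {-1..} (\<lambda>w::real. w * exp w)"
proof (rule strict_mono_onI)
  fix u v :: real assume "u \<in> {-1..}" "v \<in> {-1..}" "u < v"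
  then show "u * exp u < v * exp v"
    by (intro DERIV_pos_imp_increasing_open[OF \<open>u < v\<close>])
       (auto intro!: exI has_real_derivative_mult_exp continuous_intros)
qed

lemma mult_exp_strict_antimono_on: "strict_antimono_on {..-1} (\<lambda>w::real. w * exp w)"
proof (rule monotone_onI)
  fix u v :: real assume "u \<in> {..-1}" "v \<in> {..-1}" "u < v"
  then show "v * exp v < u * exp u"
    by (intro DERIV_neg_imp_decreasing_open[OF \<open>u < v\<close>])
       (auto intro!: exI has_real_derivative_mult_exp continuous_intros simp: mult_neg_pos)
qed

lemma lambertW0:
  fixes x :: real
  assumes "- exp (-1) \<le> x"
  shows "-1 \<le> lambertW0 x" "lambertW0 x * exp (lambertW0 x) = x"
proof -
  have "x \<le> max 0 x * exp (max 0 x)"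
    using mult_left_mono[of 1 "exp x" x] by (auto simp: max_def)
  then obtain w where w: "-1 \<le> w" "w * exp w = x"
    using IVT[of "\<lambda>w. w * exp w" "-1" x "max 0 x"] assms
    by (force intro!: continuous_intros)
  have "lambertW0 x = w"
    unfolding lambertW0_def
    using w strict_mono_on_imp_inj_on[OF mult_exp_strict_mono_on]
    by (intro the_equality) (auto simp: inj_on_def)
  with w show "-1 \<le> lambertW0 x" "lambertW0 x * exp (lambertW0 x) = x" by auto
qed

lemma lambertWm1:
  fixes x :: real
  assumes "- exp (-1) \<le> x" "x < 0"
  shows "lambertWm1 x \<le> -1" "lambertWm1 x * exp (lambertWm1 x) = x"
proof -
  \<comment> \<open>\<open>-T\<close> lies left of \<open>-1\<close> with \<open>-T e\<^sup>-\<^sup>T \<ge> x\<close>, because \<open>e\<^sup>T \<ge> T\<^sup>2 / 2\<close>\<close>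
  define T where "T = max 1 (-2/x)"
  have "1 \<le> T" by (simp add: T_def)
  have "T \<le> -x * (T^2/2)"
    using assms by (auto simp: T_def max_def power2_eq_square field_simps)
  also have "\<dots> \<le> -x * exp T"
  proof -
    have "T^2/2 \<le> exp T" using exp_lower_Taylor_quadratic[of T] \<open>1 \<le> T\<close> by linarith
    then show ?thesis using assms by (intro mult_left_mono) auto
  qed
  finally have "x \<le> -T * exp (-T)"
    by (simp add: exp_minus field_simps)
  then obtain w where w: "w \<le> -1" "w * exp w = x"
    using IVT2[of "\<lambda>w. w * exp w" "-1" x "-T"] assms \<open>1 \<le> T\<close>
    by (force intro!: continuous_intros)
  have "lambertWm1 x = w"
    unfolding lambertWm1_def
    using w mult_exp_strict_antimono_on[unfolded strict_antimono_iff_antimono]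
    by (intro the_equality) (auto simp: inj_on_def)
  with w show "lambertWm1 x \<le> -1" "lambertWm1 x * exp (lambertWm1 x) = x" by auto
qed

lemma ln_le_tangent:
  fixes y z :: real
  assumes "0 < y" "0 < z"
  shows "ln z \<le> ln y + (z - y) / y"
proof -
  have "ln (z / y) \<le> z / y - 1" using assms by (intro ln_le_minus_one) auto
  with assms show ?thesis by (simp add: ln_div diff_divide_distrib)
qed

lemma ln_ratio_le_critical:
  fixes c y y\<^sub>0 :: real
  assumes "0 < c" "1 < y" "1 < y\<^sub>0" "ln y\<^sub>0 = 1 + (c - 1) / y\<^sub>0"
  shows "ln y / (y + c - 1) \<le> ln y\<^sub>0 / (y\<^sub>0 + c - 1)"
proof -
  have "ln y \<le> ln y\<^sub>0 + (y - y\<^sub>0) / y\<^sub>0" using assms by (intro ln_le_tangent) auto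
  also have "\<dots> = (y + c - 1) / y\<^sub>0" using assms by (simp add: field_simps)
  finally have "ln y / (y + c - 1) \<le> 1 / y\<^sub>0" using assms by (simp add: field_simps)
  moreover have "ln y\<^sub>0 / (y\<^sub>0 + c - 1) = 1 / y\<^sub>0" using assms by (simp add: field_simps)
  ultimately show ?thesis by simp
qed

lemma ln_ratio_antimono_beyond_critical:
  fixes c y z y\<^sub>0 :: real
  assumes "0 < c" "1 < y\<^sub>0" "y\<^sub>0 \<le> y" "y \<le> z" "ln y\<^sub>0 = 1 + (c - 1) / y\<^sub>0"
  shows "ln z / (z + c - 1) \<le> ln y / (y + c - 1)"
proof -
  have "ln y\<^sub>0 \<le> ln y + (y\<^sub>0 - y) / y" using assms by (intro ln_le_tangent) auto
  then have "1 + (c - 1) / y\<^sub>0 + (y - y\<^sub>0) / y \<le> ln y"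
    using assms(5) by (simp add: diff_divide_distrib)
  moreover have "1 + (c - 1) / y \<le> 1 + (c - 1) / y\<^sub>0 + (y - y\<^sub>0) / y"
  proof -
    have "0 \<le> (y - y\<^sub>0) * (y\<^sub>0 + c - 1) / (y * y\<^sub>0)" using assms by auto
    also have "\<dots> = 1 + (c - 1) / y\<^sub>0 + (y - y\<^sub>0) / y - (1 + (c - 1) / y)"
      using assms by (simp add: field_simps)
    finally show ?thesis by simp
  qed
  \<comment> \<open>the sign condition for \<open>ln y / (y + c - 1)\<close> to be nonincreasing at \<open>y\<close>\<close>
  ultimately have slope: "1 + (c - 1) / y \<le> ln y" by linarith
  have "ln z * (y + c - 1) \<le> (ln y + (z - y) / y) * (y + c - 1)"
    using assms by (intro mult_right_mono ln_le_tangent) auto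
  also have "\<dots> = ln y * (y + c - 1) + (z - y) * (1 + (c - 1) / y)"
    using assms by (simp add: field_simps)
  also have "\<dots> \<le> ln y * (y + c - 1) + (z - y) * ln y"
    using slope assms by (intro add_left_mono mult_left_mono) auto
  also have "\<dots> = ln y * (z + c - 1)" by (simp add: algebra_simps)
  finally show ?thesis using assms by (simp add: divide_le_eq le_divide_eq field_simps)
qed

lemma ln_le_line_beyond_crossing:
  fixes k b y\<^sub>0 y :: real
  assumes "0 < k" "1 \<le> k * y\<^sub>0" "ln y\<^sub>0 = k * (y\<^sub>0 - 1) - b" "y\<^sub>0 \<le> y"
  shows "ln y \<le> k * (y - 1) - b"
\<comment> \<open>\<open>k y\<^sub>0 \<ge> 1\<close>: at \<open>y\<^sub>0\<close> the line is at least as steep as the concave \<open>ln\<close>.\<close>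
proof -
  have pos: "0 < y\<^sub>0" using assms(1,2) zero_less_mult_pos[of k y\<^sub>0] by linarith
  have "1 / y\<^sub>0 \<le> k" using assms(2) pos by (simp add: divide_le_eq mult.commute)
  then have "(y - y\<^sub>0) / y\<^sub>0 \<le> (y - y\<^sub>0) * k"
    using assms(4) mult_left_mono[of "1 / y\<^sub>0" k "y - y\<^sub>0"] by simp
  moreover have "ln y \<le> ln y\<^sub>0 + (y - y\<^sub>0) / y\<^sub>0" using assms pos by (intro ln_le_tangent) auto
  ultimately show ?thesis using assms(3) by (simp add: algebra_simps)
qed

lemma crossing_gt_one:
  fixes k b y :: real
  assumes "0 < b" "0 < k" "1 \<le> k * y" "ln y = k * (y - 1) - b"
  shows "1 < y"
proof (rule ccontr)
  assume "\<not> 1 < y"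
  have pos: "0 < y" using assms(2,3) zero_less_mult_pos[of k y] by linarith
  have "1 / y \<le> k" using assms(3) pos by (simp add: divide_le_eq mult.commute)
  then have "k * (y - 1) \<le> (y - 1) / y"
    using \<open>\<not> 1 < y\<close> mult_right_mono_neg[of "1 / y" k "y - 1"] by (simp add: mult.commute)
  also have "\<dots> \<le> ln y"
    using ln_le_minus_one[of "1 / y"] pos by (simp add: ln_div diff_divide_distrib)
  finally show False using assms by simp
qed

definition relay_snr :: "real \<Rightarrow> real \<Rightarrow> real" where
  "relay_snr c l = 1 + c * l / (1 - l)"

definition relay_rate :: "real \<Rightarrow> real \<Rightarrow> real \<Rightarrow> real" where
  "relay_rate b c l = l * b + (1 - l) * (b + ln (relay_snr c l))"

lemma relay_snr_gt_one: "0 < l \<Longrightarrow> l < 1 \<Longrightarrow> 0 < c \<Longrightarrow> 1 < relay_snr c l"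
  by (simp add: relay_snr_def)

lemma relay_snr_mono:
  assumes "0 < l" "l \<le> m" "m < 1" "0 \<le> c"
  shows "relay_snr c l \<le> relay_snr c m"
proof -
  have "l / (1 - l) \<le> m / (1 - m)" using assms by (simp add: field_simps)
  then show ?thesis using assms mult_left_mono by (fastforce simp: relay_snr_def)
qed

lemma relay_snr_inverse:
  assumes "1 < y" "0 < c"
  shows "(y - 1) / (y + c - 1) \<in> {0<..<1}" "relay_snr c ((y - 1) / (y + c - 1)) = y"
proof -
  have "0 < y + c - 1" using assms by simp
  then show "(y - 1) / (y + c - 1) \<in> {0<..<1}" "relay_snr c ((y - 1) / (y + c - 1)) = y"
    using assms by (simp_all add: relay_snr_def divide_simps)
qed

lemma relay_rate_eq:
  assumes "0 < l" "l < 1" "0 < c"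
  shows "relay_rate b c l = b + c * (ln (relay_snr c l) / (relay_snr c l + c - 1))"
  using assms by (simp add: relay_rate_def relay_snr_def field_simps)

lemma direct_minus_relay_rate:
  assumes "0 < l" "l < 1" "0 < c"
  shows "l * (b + a) - relay_rate b c l
    = (1 - l) * ((a / c) * (relay_snr c l - 1) - b - ln (relay_snr c l))"
  using assms by (simp add: relay_rate_def relay_snr_def field_simps)

lemma relay_rate_le_critical:
  assumes "0 < c" "1 < y\<^sub>0" "ln y\<^sub>0 = 1 + (c - 1) / y\<^sub>0" "0 < l" "l < 1"
  shows "relay_rate b c l \<le> relay_rate b c ((y\<^sub>0 - 1) / (y\<^sub>0 + c - 1))"
proof -
  define l\<^sub>0 where "l\<^sub>0 = (y\<^sub>0 - 1) / (y\<^sub>0 + c - 1)"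
  have l\<^sub>0: "0 < l\<^sub>0" "l\<^sub>0 < 1" "relay_snr c l\<^sub>0 = y\<^sub>0"
    using relay_snr_inverse[OF assms(2,1)] by (auto simp: l\<^sub>0_def)
  have "ln (relay_snr c l) / (relay_snr c l + c - 1) \<le> ln y\<^sub>0 / (y\<^sub>0 + c - 1)"
    using assms relay_snr_gt_one by (intro ln_ratio_le_critical) auto
  then have "c * (ln (relay_snr c l) / (relay_snr c l + c - 1))
      \<le> c * (ln (relay_snr c l\<^sub>0) / (relay_snr c l\<^sub>0 + c - 1))"
    using assms(1) l\<^sub>0(3) by (intro mult_left_mono) auto
  then show ?thesis
    using relay_rate_eq[OF assms(4,5,1)] relay_rate_eq[OF l\<^sub>0(1,2) assms(1)]
    by (simp add: l\<^sub>0_def)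
qed

lemma relay_rate_antimono_beyond_critical:
  assumes "0 < c" "1 < y\<^sub>0" "ln y\<^sub>0 = 1 + (c - 1) / y\<^sub>0"
    and "(y\<^sub>0 - 1) / (y\<^sub>0 + c - 1) \<le> l" "l \<le> m" "m < 1"
  shows "relay_rate b c m \<le> relay_rate b c l"
proof -
  define l\<^sub>0 where "l\<^sub>0 = (y\<^sub>0 - 1) / (y\<^sub>0 + c - 1)"
  have l\<^sub>0: "0 < l\<^sub>0" "relay_snr c l\<^sub>0 = y\<^sub>0"
    using relay_snr_inverse[OF assms(2,1)] by (auto simp: l\<^sub>0_def)
  have l: "0 < l" "l < 1" "0 < m" using assms(4-6) l\<^sub>0(1) unfolding l\<^sub>0_def by linarith+
  have "ln (relay_snr c m) / (relay_snr c m + c - 1)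
      \<le> ln (relay_snr c l) / (relay_snr c l + c - 1)"
    using assms l l\<^sub>0 relay_snr_mono[of l\<^sub>0 l c] relay_snr_mono[of l m c]
    by (intro ln_ratio_antimono_beyond_critical[of c y\<^sub>0]) (auto simp: l\<^sub>0_def)
  then have "c * (ln (relay_snr c m) / (relay_snr c m + c - 1))
      \<le> c * (ln (relay_snr c l) / (relay_snr c l + c - 1))"
    using assms(1) by (intro mult_left_mono) auto
  then show ?thesis
    using relay_rate_eq[OF l(1,2) assms(1)] relay_rate_eq[OF l(3) assms(6,1)] by simp
qed

lemma relay_rate_le_direct_beyond_crossing:
  assumes "0 < a" "0 < c" "1 < y\<^sub>0" "1 \<le> (a / c) * y\<^sub>0" "ln y\<^sub>0 = (a / c) * (y\<^sub>0 - 1) - b"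
    and "(y\<^sub>0 - 1) / (y\<^sub>0 + c - 1) \<le> l" "l < 1"
  shows "relay_rate b c l \<le> l * (b + a)"
proof -
  define l\<^sub>0 where "l\<^sub>0 = (y\<^sub>0 - 1) / (y\<^sub>0 + c - 1)"
  have l\<^sub>0: "0 < l\<^sub>0" "relay_snr c l\<^sub>0 = y\<^sub>0"
    using relay_snr_inverse[OF assms(3,2)] by (auto simp: l\<^sub>0_def)
  have l: "0 < l" using assms(6) l\<^sub>0(1) unfolding l\<^sub>0_def by linarith
  have "0 \<le> (a / c) * (relay_snr c l - 1) - b - ln (relay_snr c l)"
    using assms l l\<^sub>0 relay_snr_mono[of l\<^sub>0 l c]
    using ln_le_line_beyond_crossing[of "a / c" y\<^sub>0 b "relay_snr c l"] by (simp add: l\<^sub>0_def)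
  then have "0 \<le> l * (b + a) - relay_rate b c l"
    using direct_minus_relay_rate[OF l assms(7,2)] assms(7) by simp
  then show ?thesis by simp
qed

lemma relay_rate_eq_direct_at_crossing:
  assumes "0 < c" "1 < y\<^sub>0" "ln y\<^sub>0 = (a / c) * (y\<^sub>0 - 1) - b"
  shows "relay_rate b c ((y\<^sub>0 - 1) / (y\<^sub>0 + c - 1)) = (y\<^sub>0 - 1) / (y\<^sub>0 + c - 1) * (b + a)"
  using assms relay_snr_inverse[OF assms(2,1)]
    direct_minus_relay_rate[of "(y\<^sub>0 - 1) / (y\<^sub>0 + c - 1)" c b a]
  by simp

lemma lambertWm1_crossing:
  fixes k b :: real
  assumes "0 < k" "0 < b"
  defines "y \<equiv> - lambertWm1 (- k * exp (- b - k)) / k"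
  shows "1 \<le> k * y" "ln y = k * (y - 1) - b" "1 < y"
proof -
  define x where "x = - k * exp (- b - k)"
  have "k * exp (- b - k) \<le> k * exp (- k)"
    using assms by (intro mult_left_mono) auto
  also have "\<dots> \<le> exp (k - 1) * exp (- k)"
    using exp_ge_add_one_self[of "k - 1"] by (intro mult_right_mono) auto
  also have "\<dots> = exp (- 1)" by (simp flip: exp_add)
  finally have x: "- exp (- 1) \<le> x" "x < 0" using assms by (auto simp: x_def)
  have w: "lambertWm1 x = - (k * y)" using assms by (simp add: y_def x_def)
  show ky: "1 \<le> k * y" using lambertWm1(1)[OF x] w by simp
  then have "0 < y" using assms zero_less_mult_pos[of k y] by linarith
  have "(k * y) * exp (- (k * y)) = k * exp (- b - k)"
    using lambertWm1(2)[OF x, unfolded w] by (simp add: x_def)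
  then have "y * exp (- (k * y)) = exp (- b - k)" using assms(1) by simp
  then have "ln y - k * y = - b - k"
    using \<open>0 < y\<close> ln_mult[of y "exp (- (k * y))"] by simp
  then show "ln y = k * (y - 1) - b" by (simp add: algebra_simps)
  then show "1 < y" using assms ky by (intro crossing_gt_one) auto
qed

lemma lambertWm1_crossing_ratio:
  fixes a b c :: real
  assumes "0 < a" "0 < b" "0 < c"
  obtains y where "1 < y" "1 \<le> (a / c) * y" "ln y = (a / c) * (y - 1) - b"
    "(- (1 / a) * lambertWm1 (- (a / c) * exp (- b - a / c)) - 1 / c) /
     (1 - (1 / a) * lambertWm1 (- (a / c) * exp (- b - a / c)) - 1 / c)
     = (y - 1) / (y + c - 1)"
proof -
  define y where "y = - lambertWm1 (- (a / c) * exp (- b - a / c)) / (a / c)"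
  have y: "1 \<le> (a / c) * y" "ln y = (a / c) * (y - 1) - b" "1 < y"
    using lambertWm1_crossing[of "a / c" b] assms by (simp_all add: y_def)
  have "(1 / a) * lambertWm1 (- (a / c) * exp (- b - a / c)) = - (y / c)"
    using assms by (simp add: y_def)
  then have "(- (1 / a) * lambertWm1 (- (a / c) * exp (- b - a / c)) - 1 / c) /
     (1 - (1 / a) * lambertWm1 (- (a / c) * exp (- b - a / c)) - 1 / c)
     = (y / c - 1 / c) / (1 + y / c - 1 / c)"
    by (simp only: mult_minus_left minus_minus diff_minus_eq_add)
  also have "\<dots> = (y - 1) / (y + c - 1)"
    using assms by (simp add: divide_simps add.commute)
  finally show ?thesis using that y by blast
qed

lemma lambertW0_critical:
  fixes c :: real
  assumes "0 < c"
  defines "y \<equiv> exp (lambertW0 ((c - 1) / exp 1) + 1)"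
  shows "1 < y" "ln y = 1 + (c - 1) / y"
proof -
  define v where "v = lambertW0 ((c - 1) / exp 1)"
  have x: "- exp (- 1) \<le> (c - 1) / exp 1" using assms by (simp add: exp_minus field_simps)
  have v: "-1 \<le> v" "v * y = c - 1"
    using lambertW0[OF x] by (auto simp: v_def y_def exp_add field_simps)
  have "v \<noteq> -1" using v(2) assms by (auto simp: y_def v_def)
  then show "1 < y" using v(1) by (simp add: y_def v_def[symmetric])
  then show "ln y = 1 + (c - 1) / y" using v(2) by (auto simp: y_def v_def[symmetric] field_simps)
qed

lemma maximin_at_max_of_crossing_and_peak:
  fixes h g :: "'a::linorder \<Rightarrow> 'b::linorder"
  assumes "l\<^sub>1 \<in> S" "l\<^sub>2 \<in> S" "x \<in> S"
    and h_mono: "\<And>x y. x \<in> S \<Longrightarrow> y \<in> S \<Longrightarrow> x \<le> y \<Longrightarrow> h x \<le> h y"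
    and crossing: "h l\<^sub>1 = g l\<^sub>1"
    and below: "\<And>x. x \<in> S \<Longrightarrow> l\<^sub>1 \<le> x \<Longrightarrow> g x \<le> h x"
    and peak: "\<And>x. x \<in> S \<Longrightarrow> g x \<le> g l\<^sub>2"
    and antimono: "\<And>x y. x \<in> S \<Longrightarrow> y \<in> S \<Longrightarrow> l\<^sub>2 \<le> x \<Longrightarrow> x \<le> y \<Longrightarrow> g y \<le> g x"
  shows "min (h x) (g x) \<le> min (h (max l\<^sub>1 l\<^sub>2)) (g (max l\<^sub>1 l\<^sub>2))"
proof (cases "l\<^sub>2 \<le> l\<^sub>1")
  case True
  have "min (h x) (g x) \<le> h l\<^sub>1"
  proof (cases "x \<le> l\<^sub>1")
    case True
    then show ?thesis using h_mono[of x l\<^sub>1] assms(1,3) by (simp add: min.coboundedI1)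
  next
    case False
    then show ?thesis
      using antimono[of l\<^sub>1 x] crossing assms(1,3) \<open>l\<^sub>2 \<le> l\<^sub>1\<close> by (simp add: min.coboundedI2)
  qed
  then show ?thesis using True crossing by (simp add: max_absorb1)
next
  case False
  have "min (h x) (g x) \<le> g l\<^sub>2" using peak[OF assms(3)] by (simp add: min.coboundedI2)
  then show ?thesis using False below[of l\<^sub>2] assms(2) by (simp add: max_absorb2)
qed

lemma ps_rate_gt_direct_rate:
  fixes P_S H_SR H_SD sa2 sb2 rho :: real
  assumes "0 < P_S" "0 < H_SD" "0 < sa2" "0 < sb2" "H_SD < H_SR"
    and "rho < 1 - H_SD * sb2 / (H_SR * (sa2 + sb2) - H_SD * sa2)"
  shows "ln (1 + P_S * H_SD / (sa2 + sb2))
    < ln (1 + (1 - rho) * P_S * H_SR / ((1 - rho) * sa2 + sb2))"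
proof -
  have D: "0 < H_SR * (sa2 + sb2) - H_SD * sa2"
  proof -
    have "H_SD * sa2 < H_SR * sa2" using assms by simp
    also have "\<dots> < H_SR * (sa2 + sb2)" using assms by simp
    finally show ?thesis by simp
  qed
  have gap: "H_SD * sb2 / (H_SR * (sa2 + sb2) - H_SD * sa2) < 1 - rho" using assms(6) by linarith
  moreover have "0 < H_SD * sb2 / (H_SR * (sa2 + sb2) - H_SD * sa2)" using D assms by simp
  ultimately have "0 < 1 - rho" by linarith
  from gap have "H_SD * sb2 < (1 - rho) * (H_SR * (sa2 + sb2) - H_SD * sa2)"
    by (simp only: pos_divide_less_eq[OF D])
  then have "H_SD * ((1 - rho) * sa2 + sb2) < (1 - rho) * H_SR * (sa2 + sb2)"
    by (simp add: algebra_simps)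
  then have "P_S * H_SD * ((1 - rho) * sa2 + sb2) < (1 - rho) * P_S * H_SR * (sa2 + sb2)"
    using assms(1) mult_strict_left_mono by (fastforce simp: algebra_simps)
  moreover have "0 < (1 - rho) * sa2 + sb2" "0 < sa2 + sb2"
    using assms \<open>0 < 1 - rho\<close> by (simp_all add: add_pos_pos)
  ultimately have "P_S * H_SD / (sa2 + sb2) < (1 - rho) * P_S * H_SR / ((1 - rho) * sa2 + sb2)"
    by (simp add: frac_less_eq divide_neg_pos)
  moreover have "0 < P_S * H_SD / (sa2 + sb2)" using assms by (simp add: add_pos_pos)
  ultimately show ?thesis by (subst ln_less_cancel_iff) auto
qed

theorem corollary1:
  fixes P_S H_SR H_SD H_RD sa2 sb2 sR2 sD2 eta rho rho_th :: real
    and C_SR b a' c' lam1 lam2 :: real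
    and f :: "real \<Rightarrow> real"
  assumes pos: "P_S > 0" "H_SR > 0" "H_SD > 0" "H_RD > 0" "sa2 > 0" "sb2 > 0"
    and eta: "0 < eta" "eta \<le> 1"
    and noise: "sR2 = sa2 + sb2" "sD2 = sa2 + sb2"
    and gain: "H_SR > H_SD"
    and rho_th_def: "rho_th = 1 - (H_SD * sb2) / (H_SR * sD2 - H_SD * sa2)"
    and rho: "0 < rho" "rho < rho_th"
    and C_SR_def: "C_SR = ln (1 + ((1 - rho) * P_S * H_SR) / ((1 - rho) * sa2 + sb2))"
    and b_def: "b = ln (1 + P_S * H_SD / sD2)"
    and a'_def: "a' = C_SR - b"
    and c'_def: "c' = eta * rho * H_SR * H_RD * P_S / sD2"
    and f_def: "\<And>lam. f lam = min (lam * C_SR)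
                  (lam * b + (1 - lam) * (b + ln (1 + c' * lam / (1 - lam))))"
    and lam1_def: "lam1 =
        (- (1 / a') * lambertWm1 (- (a' / c') * exp (- b - a' / c')) - 1 / c') /
        (1 - (1 / a') * lambertWm1 (- (a' / c') * exp (- b - a' / c')) - 1 / c')"
    and lam2_def: "lam2 =
        (exp (lambertW0 ((c' - 1) / exp 1) + 1) - 1) /
        (exp (lambertW0 ((c' - 1) / exp 1) + 1) + c' - 1)"
  shows "max lam1 lam2 \<in> {0<..<1} \<and>
         (\<forall>lam \<in> {0<..<1}. f lam \<le> f (max lam1 lam2))"
proof -
  have "b < C_SR"
    using ps_rate_gt_direct_rate[of P_S H_SD sa2 sb2 H_SR rho] pos gain rho rho_th_def
    by (simp add: b_def C_SR_def noise)
  then have a': "0 < a'" and C_SR: "C_SR = b + a'" by (simp_all add: a'_def)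
  have b: "0 < b" using pos by (simp add: b_def noise add_pos_pos)
  have c': "0 < c'" using pos eta rho by (simp add: c'_def noise add_pos_pos)
  obtain y\<^sub>1 where y\<^sub>1: "1 < y\<^sub>1" "1 \<le> (a' / c') * y\<^sub>1" "ln y\<^sub>1 = (a' / c') * (y\<^sub>1 - 1) - b"
    and lam1: "lam1 = (y\<^sub>1 - 1) / (y\<^sub>1 + c' - 1)"
    using lambertWm1_crossing_ratio[OF a' b c'] unfolding lam1_def by blast
  define y\<^sub>2 where "y\<^sub>2 = exp (lambertW0 ((c' - 1) / exp 1) + 1)"
  have y\<^sub>2: "1 < y\<^sub>2" "ln y\<^sub>2 = 1 + (c' - 1) / y\<^sub>2"
    using lambertW0_critical[OF c'] by (simp_all add: y\<^sub>2_def)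
  have lam2: "lam2 = (y\<^sub>2 - 1) / (y\<^sub>2 + c' - 1)" by (simp add: lam2_def y\<^sub>2_def)
  have lams: "lam1 \<in> {0<..<1}" "lam2 \<in> {0<..<1}"
    using relay_snr_inverse(1)[OF y\<^sub>1(1) c'] relay_snr_inverse(1)[OF y\<^sub>2(1) c']
    by (simp_all only: lam1 lam2)
  have "f lam \<le> f (max lam1 lam2)" if "lam \<in> {0<..<1}" for lam
    unfolding f_def relay_rate_def[symmetric] relay_snr_def[symmetric]
  proof (rule maximin_at_max_of_crossing_and_peak[OF lams that])
    show "l * C_SR \<le> m * C_SR" if "l \<le> m" for l m
      using that \<open>b < C_SR\<close> b by (intro mult_right_mono) auto
    show "lam1 * C_SR = relay_rate b c' lam1"
      using relay_rate_eq_direct_at_crossing[OF c' y\<^sub>1(1,3)] by (simp add: lam1 C_SR)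
    show "relay_rate b c' l \<le> l * C_SR" if "l \<in> {0<..<1}" "lam1 \<le> l" for l
      using relay_rate_le_direct_beyond_crossing[OF a' c' y\<^sub>1] that by (simp add: lam1 C_SR)
    show "relay_rate b c' l \<le> relay_rate b c' lam2" if "l \<in> {0<..<1}" for l
      using relay_rate_le_critical[OF c' y\<^sub>2] that by (simp add: lam2)
    show "relay_rate b c' m \<le> relay_rate b c' l"
      if "l \<in> {0<..<1}" "m \<in> {0<..<1}" "lam2 \<le> l" "l \<le> m" for l m
      using relay_rate_antimono_beyond_critical[OF c' y\<^sub>2] that by (simp add: lam2)
  qed
  with lams show ?thesis by auto
qed

end
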